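(* Let $V$ be a proper $K$-poset with a single maximal node $m$ (and $\dim V\ge1$). If $d_V(m)>1$, then there exists a proper $K$-poset $U$ which is a splitting of $V$ at $m$, with associated set $\mathcal M\subseteq\max U$, such that $d_{L_U(m_i)}(m_i)=1$ for all $m_i\in\mathcal M$.
   Context: For a poset $U$: $L(u)=L_U(u)=\{v\le u\}$, $G(u)=\{v\ge u\}$, $L(u)^*$, $G(u)^*$ the same sets with $u$ removed; height of $u$ is $\dim L(u)$ (dimension = supremum of chain lengths); $H_i$ = set of height-$i$ nodes; $\operatorname{mub}A$ = minimal common upper bounds of $A$; $[b/c]$ = set of $u$ with $G(u)^*=\{b\}$, $L(u)^*=\{c\}$. A poset with $\dim\le2$ is a $K$-poset if $\min U$, $H_2$ are finite, $\operatorname{mub}\{u,v\}$ is finite for distinct minimal $u,v$, and $[u/w]$ is infinite whenever $u>v>w$ for some $v$; proper if $|[u/w]|\in\{0,|U|\}$ for all maximal $u$, minimal $w$. $\mathcal H_U$ = minimal nodes together with height-one nodes dominating at least two minimal nodes. For a poset $W$ with a single maximal node $n$ and $\dim W\ge1$: $\mathcal H_W^*=\mathcal H_W\setminus\{n\}$; $\Lambda_W\subseteq\mathcal H_W^*$ consists of the nodes of $H_1\cap\mathcal H_W^*$ together with all nodes $v\in\mathcal H_W^*$ with $G(v)\cap H_1\cap\mathcal H_W^*=\emptyset$; and $d_W(n)=|\Lambda_W|$. Splitting: for a poset $V$ with a maximal node $m$ of positive height, $U$ is a splitting of $V$ at $m$ if there are a finite nonempty $\mathcal M\subseteq\max U$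 of positive-height nodes and a surjective order-preserving $\varphi:U\to V$ with $\varphi^{-1}(m)=\mathcal M$, $|\varphi^{-1}(v)|=1$ for $v\ne m$, and such that whenever $\varphi(x')=x\le y$ there is $y'\ge x'$ with $\varphi(y')=y$. *)

theory Defs
  imports Main "HOL-Library.Extended_Nat" "HOL-Library.Equipollence"
begin

definition poset :: "'a set \<Rightarrow> ('a \<Rightarrow> 'a \<Rightarrow> bool) \<Rightarrow> bool" where
  "poset U le \<longleftrightarrow> (\<forall>x\<in>U. le x x) \<and> (\<forall>x\<in>U. \<forall>y\<in>U. le x y \<and> le y x \<longrightarrow> x = y)
     \<and> (\<forall>x\<in>U. \<forall>y\<in>U. \<forall>z\<in>U. le x y \<and> le y z \<longrightarrow> le x z)"

definition lessP :: "('a \<Rightarrow> 'a \<Rightarrow> bool) \<Rightarrow> 'a \<Rightarrow> 'a \<Rightarrow> bool" where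
  "lessP le x y \<longleftrightarrow> le x y \<and> x \<noteq> y"

definition is_chainP :: "('a \<Rightarrow> 'a \<Rightarrow> bool) \<Rightarrow> 'a set \<Rightarrow> bool" where
  "is_chainP le C \<longleftrightarrow> (\<forall>x\<in>C. \<forall>y\<in>C. le x y \<or> le y x)"

definition dimP :: "('a \<Rightarrow> 'a \<Rightarrow> bool) \<Rightarrow> 'a set \<Rightarrow> enat" where
  "dimP le A = (SUP C \<in> {C. C \<subseteq> A \<and> finite C \<and> C \<noteq> {} \<and> is_chainP le C}. enat (card C - 1))"

definition Lset :: "'a set \<Rightarrow> ('a \<Rightarrow> 'a \<Rightarrow> bool) \<Rightarrow> 'a \<Rightarrow> 'a set" where
  "Lset U le u = {v\<in>U. le v u}"

definition Gset :: "'a set \<Rightarrow> ('a \<Rightarrow> 'a \<Rightarrow> bool) \<Rightarrow> 'a \<Rightarrow> 'a set" where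
  "Gset U le u = {v\<in>U. le u v}"

definition height :: "'a set \<Rightarrow> ('a \<Rightarrow> 'a \<Rightarrow> bool) \<Rightarrow> 'a \<Rightarrow> enat" where
  "height U le u = dimP le (Lset U le u)"

definition Hset :: "'a set \<Rightarrow> ('a \<Rightarrow> 'a \<Rightarrow> bool) \<Rightarrow> nat \<Rightarrow> 'a set" where
  "Hset U le i = {u\<in>U. height U le u = enat i}"

definition minset :: "'a set \<Rightarrow> ('a \<Rightarrow> 'a \<Rightarrow> bool) \<Rightarrow> 'a set" where
  "minset U le = {u\<in>U. \<not> (\<exists>v\<in>U. lessP le v u)}"

definition maxset :: "'a set \<Rightarrow> ('a \<Rightarrow> 'a \<Rightarrow> bool) \<Rightarrow> 'a set" where
  "maxset U le = {u\<in>U. \<not> (\<exists>v\<in>U. lessP le u v)}"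

definition mub :: "'a set \<Rightarrow> ('a \<Rightarrow> 'a \<Rightarrow> bool) \<Rightarrow> 'a set \<Rightarrow> 'a set" where
  "mub U le A = {u\<in>U. (\<forall>a\<in>A. le a u) \<and> \<not> (\<exists>w\<in>U. (\<forall>a\<in>A. le a w) \<and> lessP le w u)}"

text \<open>[b/c]: nodes u with G(u)* = {b} and L(u)* = {c}.\<close>
definition bracket :: "'a set \<Rightarrow> ('a \<Rightarrow> 'a \<Rightarrow> bool) \<Rightarrow> 'a \<Rightarrow> 'a \<Rightarrow> 'a set" where
  "bracket U le b c = {u\<in>U. Gset U le u - {u} = {b} \<and> Lset U le u - {u} = {c}}"

definition K_poset :: "'a set \<Rightarrow> ('a \<Rightarrow> 'a \<Rightarrow> bool) \<Rightarrow> bool" where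
  "K_poset U le \<longleftrightarrow> poset U le \<and> dimP le U \<le> 2
     \<and> finite (minset U le) \<and> finite (Hset U le 2)
     \<and> (\<forall>u\<in>minset U le. \<forall>v\<in>minset U le. u \<noteq> v \<longrightarrow> finite (mub U le {u, v}))
     \<and> (\<forall>u\<in>U. \<forall>v\<in>U. \<forall>w\<in>U. lessP le v u \<and> lessP le w v \<longrightarrow> infinite (bracket U le u w))"

definition proper :: "'a set \<Rightarrow> ('a \<Rightarrow> 'a \<Rightarrow> bool) \<Rightarrow> bool" where
  "proper U le \<longleftrightarrow> (\<forall>u\<in>maxset U le. \<forall>w\<in>minset U le.
     bracket U le u w = {} \<or> bracket U le u w \<approx> U)"

definition calH :: "'a set \<Rightarrow> ('a \<Rightarrow> 'a \<Rightarrow> bool) \<Rightarrow> 'a set" where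
  "calH U le = minset U le \<union> {u\<in>Hset U le 1. \<exists>a\<in>minset U le. \<exists>b\<in>minset U le.
      a \<noteq> b \<and> le a u \<and> le b u}"

definition LambdaW :: "'a set \<Rightarrow> ('a \<Rightarrow> 'a \<Rightarrow> bool) \<Rightarrow> 'a \<Rightarrow> 'a set" where
  "LambdaW W le n = (Hset W le 1 \<inter> (calH W le - {n}))
     \<union> {v \<in> calH W le - {n}. Gset W le v \<inter> Hset W le 1 \<inter> (calH W le - {n}) = {}}"

definition dval :: "'a set \<Rightarrow> ('a \<Rightarrow> 'a \<Rightarrow> bool) \<Rightarrow> 'a \<Rightarrow> enat" where
  "dval W le n = (if finite (LambdaW W le n) then enat (card (LambdaW W le n)) else \<infinity>)"

definition splitting_with ::
  "'b set \<Rightarrow> ('b \<Rightarrow> 'b \<Rightarrow> bool) \<Rightarrow> 'a set \<Rightarrow> ('a \<Rightarrow> 'a \<Rightarrow> bool) \<Rightarrow> 'a \<Rightarrow> ('b \<Rightarrow> 'a) \<Rightarrow> 'b set \<Rightarrow> bool" where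
  "splitting_with U leU V leV m \<phi> M \<longleftrightarrow>
     m \<in> maxset V leV \<and> height V leV m > 0
     \<and> finite M \<and> M \<noteq> {} \<and> M \<subseteq> maxset U leU \<and> (\<forall>x\<in>M. height U leU x > 0)
     \<and> \<phi> ` U = V
     \<and> (\<forall>x\<in>U. \<forall>y\<in>U. leU x y \<longrightarrow> leV (\<phi> x) (\<phi> y))
     \<and> {x\<in>U. \<phi> x = m} = M
     \<and> (\<forall>v\<in>V. v \<noteq> m \<longrightarrow> card {x\<in>U. \<phi> x = v} = 1)
     \<and> (\<forall>x'\<in>U. \<forall>y\<in>V. leV (\<phi> x') y \<longrightarrow> (\<exists>y'\<in>U. leU x' y' \<and> \<phi> y' = y))"

end

theory Submission
  imports Defs
begin

text \<open>Below the maximal node \<open>m\<close> a proper \<open>K\<close>-poset \<open>V\<close> consists of finitely many minimal nodes,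
finitely many hubs (height-one nodes above several minimal nodes) and, for each minimal \<open>w\<close>, the
singles above \<open>w\<close> alone; these form \<open>[m/w]\<close>, which by properness is empty or as large as \<open>V\<close>.
Replace \<open>m\<close> by one copy \<open>m\<^sub>l\<close> for each \<open>l \<in> \<Lambda>\<^sub>V\<close> (the hubs and the minimal nodes below no
hub), put the down-set of \<open>l\<close> below \<open>m\<^sub>l\<close>, and cut each \<open>[m/w]\<close> into pieces of full
cardinality, one for every \<open>l \<in> \<Lambda>\<^sub>V\<close> above \<open>w\<close>, placing the piece of \<open>l\<close> below \<open>m\<^sub>l\<close>.  The new
brackets \<open>[m\<^sub>l/w]\<close> are exactly these pieces, so the result is again a proper \<open>K\<close>-poset, and
\<open>\<Lambda>\<close> of \<open>L(m\<^sub>l)\<close> is the single node \<open>l\<close>.\<close>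

section \<open>Equipollence\<close>

lemma Times_finite_eqpoll_infinite:
  assumes "infinite S" "finite I" "I \<noteq> {}"
  shows "S \<times> I \<approx> S"
proof -
  have "I \<lesssim> S" using finite_lepoll_infinite assms by blast
  then have "ordLeq2 (card_of I) (card_of S)"
    unfolding lepoll_def using card_of_ordLeq by blast
  then show ?thesis
    using card_of_Times_infinite[OF assms(1,3)] eqpoll_iff_card_of_ordIso by blast
qed

lemma infinite_Un_finite_eqpoll:
  assumes "infinite A" "finite B"
  shows "A \<union> B \<approx> A"
  using assms(2)
proof (induction B rule: finite_induct)
  case (insert b B)
  have "insert b (A \<union> B) \<approx> A \<union> B"
    using assms(1) by (simp add: infinite_insert_eqpoll)
  then show ?case using insert eqpoll_trans by fastforce
qed simp

lemma infinite_split_eqpoll: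
  assumes "infinite S" "finite I" "I \<noteq> {}"
  obtains f where "\<And>x. x \<in> S \<Longrightarrow> f x \<in> I" "\<And>i. i \<in> I \<Longrightarrow> {x\<in>S. f x = i} \<approx> S"
proof -
  obtain g where g: "bij_betw g (S \<times> I) S"
    using Times_finite_eqpoll_infinite[OF assms] unfolding eqpoll_def by blast
  define f where "f x = snd (inv_into (S \<times> I) g x)" for x
  have inv: "bij_betw (inv_into (S \<times> I) g) S (S \<times> I)"
    using g by (rule bij_betw_inv_into)
  have fibre: "{x\<in>S. f x = i} \<approx> S" if i: "i \<in> I" for i
  proof -
    have "{x\<in>S. f x = i} = g ` (S \<times> {i})"
    proof (intro equalityI subsetI)
      fix x assume "x \<in> {x\<in>S. f x = i}"
      then have "inv_into (S \<times> I) g x \<in> S \<times> {i}" "g (inv_into (S \<times> I) g x) = x"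
        using bij_betwE[OF inv] bij_betw_inv_into_right[OF g] unfolding f_def by force+
      then show "x \<in> g ` (S \<times> {i})" by (metis image_eqI)
    next
      fix x assume "x \<in> g ` (S \<times> {i})"
      then obtain s where "s \<in> S" "x = g (s, i)" by blast
      then show "x \<in> {x\<in>S. f x = i}"
        using g i bij_betw_inv_into_left[OF g] bij_betwE[OF g] unfolding f_def by force
    qed
    also have "\<dots> \<approx> S \<times> {i}"
      using g i by (intro inj_on_image_eqpoll_self) (auto simp: bij_betw_def intro: inj_on_subset)
    also have "S \<times> {i} \<approx> S"
      using eqpoll_trans[OF times_commute_eqpoll times_singleton_eqpoll] .
    finally show ?thesis .
  qed
  show ?thesis
    using that[of f] fibre bij_betwE[OF inv] unfolding f_def by force
qed

section \<open>Chains, dimension and height\<close>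

lemma dimP_gt_iff:
  "enat k < dimP le A \<longleftrightarrow> (\<exists>C. C \<subseteq> A \<and> finite C \<and> C \<noteq> {} \<and> is_chainP le C \<and> k + 1 < card C)"
  unfolding dimP_def less_SUP_iff by (simp add: less_diff_conv)

lemma dimP_le_dimP_chain_map:
  assumes "\<And>C. C \<subseteq> A \<Longrightarrow> is_chainP leA C \<Longrightarrow> inj_on f C \<and> is_chainP leB (f ` C)"
    and "f ` A \<subseteq> B"
  shows "dimP leA A \<le> dimP leB B"
  unfolding dimP_def
proof (rule SUP_mono)
  fix C assume "C \<in> {C. C \<subseteq> A \<and> finite C \<and> C \<noteq> {} \<and> is_chainP leA C}"
  with assms show "\<exists>D\<in>{C. C \<subseteq> B \<and> finite C \<and> C \<noteq> {} \<and> is_chainP leB C}.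
      enat (card C - 1) \<le> enat (card D - 1)"
    by (intro bexI[of _ "f ` C"]) (auto simp: card_image)
qed

lemma three_elements_obtain:
  assumes "3 \<le> card C"
  obtains x y z where "x \<in> C" "y \<in> C" "z \<in> C" "x \<noteq> y" "y \<noteq> z" "x \<noteq> z"
proof -
  obtain x B where "C = insert x B" "x \<notin> B" "Suc (Suc 0) \<le> card B"
    using assms card_le_Suc_iff[of "Suc (Suc 0)" C] by (auto simp: numeral_3_eq_3)
  moreover obtain y B' where "B = insert y B'" "y \<notin> B'" "Suc 0 \<le> card B'"
    using card_le_Suc_iff[of "Suc 0" B] calculation(3) by auto
  moreover obtain z where "z \<in> B'"
    using calculation(6) by (metis card.empty not_one_le_zero One_nat_def ex_in_conv)
  ultimately show ?thesis using that by blast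
qed

lemma poset_subset: "poset P le \<Longrightarrow> Q \<subseteq> P \<Longrightarrow> poset Q le"
  unfolding poset_def by blast

lemma Lset_subset: "Lset P le u \<subseteq> P"
  unfolding Lset_def by auto

context
  fixes P :: "'x set" and le :: "'x \<Rightarrow> 'x \<Rightarrow> bool"
  assumes po: "poset P le"
begin

lemma poset_refl: "x \<in> P \<Longrightarrow> le x x"
  using po unfolding poset_def by blast

lemma poset_antisym: "x \<in> P \<Longrightarrow> y \<in> P \<Longrightarrow> le x y \<Longrightarrow> le y x \<Longrightarrow> x = y"
  using po unfolding poset_def by blast

lemma poset_trans: "x \<in> P \<Longrightarrow> y \<in> P \<Longrightarrow> z \<in> P \<Longrightarrow> le x y \<Longrightarrow> le y z \<Longrightarrow> le x z"
  using po unfolding poset_def by blast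

lemma lessP_le_trans:
  "x \<in> P \<Longrightarrow> y \<in> P \<Longrightarrow> z \<in> P \<Longrightarrow> lessP le x y \<Longrightarrow> le y z \<Longrightarrow> lessP le x z"
  using poset_trans[of x y z] poset_antisym[of x y] unfolding lessP_def by blast

lemma chain3_lessP:
  assumes "x \<in> P" "y \<in> P" "z \<in> P" "x \<noteq> y" "y \<noteq> z" "x \<noteq> z"
    and "is_chainP le {x, y, z}"
  shows "\<exists>a\<in>{x,y,z}. \<exists>b\<in>{x,y,z}. \<exists>c\<in>{x,y,z}. lessP le a b \<and> lessP le b c"
proof -
  have "le x y \<or> le y x" "le y z \<or> le z y" "le x z \<or> le z x"
    using assms(7) unfolding is_chainP_def by blast+
  then have "(le x y \<and> le y z) \<or> (le x z \<and> le z y) \<or> (le y x \<and> le x z) \<or> (le y z \<and> le z x)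
     \<or> (le z x \<and> le x y) \<or> (le z y \<and> le y x)"
    using assms(1-6) poset_trans[OF assms(1,2,3)] poset_trans[OF assms(1,3,2)]
      poset_trans[OF assms(2,1,3)] poset_trans[OF assms(2,3,1)] poset_trans[OF assms(3,1,2)]
      poset_trans[OF assms(3,2,1)] by blast
  then show ?thesis using assms(4-6) unfolding lessP_def by blast
qed

lemma is_chainP_if_lessP_comparable:
  assumes "C \<subseteq> P" "\<And>a b. a \<in> C \<Longrightarrow> b \<in> C \<Longrightarrow> a = b \<or> lessP le a b \<or> lessP le b a"
  shows "is_chainP le C"
  using assms poset_refl unfolding is_chainP_def lessP_def by blast

lemma dimP_pos_iff:
  assumes "A \<subseteq> P"
  shows "0 < dimP le A \<longleftrightarrow> (\<exists>x\<in>A. \<exists>y\<in>A. lessP le x y)"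
proof
  assume "0 < dimP le A"
  then obtain C where C: "C \<subseteq> A" "is_chainP le C" "1 < card C"
    using dimP_gt_iff[of 0 le A] by (auto simp: zero_enat_def)
  then obtain x y where "x \<in> C" "y \<in> C" "x \<noteq> y"
    by (auto simp: Suc_le_eq[symmetric] card_le_Suc_iff)
  with C show "\<exists>x\<in>A. \<exists>y\<in>A. lessP le x y"
    unfolding is_chainP_def lessP_def by blast
next
  assume "\<exists>x\<in>A. \<exists>y\<in>A. lessP le x y"
  then obtain x y where xy: "x \<in> A" "y \<in> A" "lessP le x y" by blast
  with assms have "is_chainP le {x, y}"
    by (intro is_chainP_if_lessP_comparable) auto
  with xy show "0 < dimP le A"
    unfolding zero_enat_def dimP_gt_iff by (intro exI[of _ "{x, y}"]) (auto simp: lessP_def)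
qed

lemma dimP_gt_1_iff:
  assumes "A \<subseteq> P"
  shows "1 < dimP le A \<longleftrightarrow> (\<exists>x\<in>A. \<exists>y\<in>A. \<exists>z\<in>A. lessP le x y \<and> lessP le y z)"
proof
  assume "1 < dimP le A"
  then obtain C where C: "C \<subseteq> A" "is_chainP le C" "3 \<le> card C"
    using dimP_gt_iff[of 1 le A] by (auto simp: one_enat_def numeral_3_eq_3 Suc_le_eq)
  obtain x y z where xyz: "x \<in> C" "y \<in> C" "z \<in> C" "x \<noteq> y" "y \<noteq> z" "x \<noteq> z"
    using three_elements_obtain[OF C(3)] by blast
  moreover have "is_chainP le {x, y, z}"
    using C(2) xyz unfolding is_chainP_def by blast
  ultimately show "\<exists>x\<in>A. \<exists>y\<in>A. \<exists>z\<in>A. lessP le x y \<and> lessP le y z"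
    using chain3_lessP[of x y z] C assms by blast
next
  assume "\<exists>x\<in>A. \<exists>y\<in>A. \<exists>z\<in>A. lessP le x y \<and> lessP le y z"
  then obtain x y z where xyz: "x \<in> A" "y \<in> A" "z \<in> A" "lessP le x y" "lessP le y z" by blast
  with assms have xz: "lessP le x z" using lessP_le_trans[of x y z] unfolding lessP_def by blast
  with xyz assms have "is_chainP le {x, y, z}"
    by (intro is_chainP_if_lessP_comparable) auto
  moreover have "card {x, y, z} = 3" using xyz xz unfolding lessP_def by auto
  ultimately show "1 < dimP le A"
    unfolding one_enat_def dimP_gt_iff using xyz by (intro exI[of _ "{x, y, z}"]) auto
qed

lemma dimP_gt_2_if_chain4:
  assumes "A \<subseteq> P" "a \<in> A" "b \<in> A" "c \<in> A" "d \<in> A"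
    and "lessP le a b" "lessP le b c" "lessP le c d"
  shows "2 < dimP le A"
proof -
  have P: "a \<in> P" "b \<in> P" "c \<in> P" "d \<in> P" using assms by auto
  have ac: "lessP le a c" and bd: "lessP le b d"
    using lessP_le_trans[OF P(1,2,3)] lessP_le_trans[OF P(2,3,4)] assms
    unfolding lessP_def by blast+
  have ad: "lessP le a d" using lessP_le_trans[OF P(1,3,4)] assms ac unfolding lessP_def by blast
  have "is_chainP le {a, b, c, d}"
    using P assms ac bd ad by (intro is_chainP_if_lessP_comparable) auto
  moreover have "card {a, b, c, d} = 4" using assms ac bd ad unfolding lessP_def by auto
  ultimately show ?thesis
    unfolding numeral_eq_enat dimP_gt_iff using assms by (intro exI[of _ "{a, b, c, d}"]) auto
qed

lemma height_eq_0_iff: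
  assumes "u \<in> P"
  shows "height P le u = 0 \<longleftrightarrow> \<not> (\<exists>v\<in>P. lessP le v u)"
proof -
  have "height P le u = 0 \<longleftrightarrow> \<not> (\<exists>x\<in>Lset P le u. \<exists>y\<in>Lset P le u. lessP le x y)"
    unfolding height_def using dimP_pos_iff[OF Lset_subset[of P le u]]
    by (simp add: zero_less_iff_neq_zero) blast
  also have "\<dots> \<longleftrightarrow> \<not> (\<exists>v\<in>P. lessP le v u)"
    using assms poset_refl lessP_le_trans unfolding Lset_def lessP_def by blast
  finally show ?thesis .
qed

lemma height_pos_iff:
  "u \<in> P \<Longrightarrow> 0 < height P le u \<longleftrightarrow> (\<exists>v\<in>P. lessP le v u)"
  using height_eq_0_iff by (simp add: zero_less_iff_neq_zero)

lemma height_gt_1_iff: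
  assumes "u \<in> P"
  shows "1 < height P le u \<longleftrightarrow> (\<exists>v\<in>P. \<exists>w\<in>P. lessP le w v \<and> lessP le v u)"
proof -
  have "1 < height P le u \<longleftrightarrow>
      (\<exists>x\<in>Lset P le u. \<exists>y\<in>Lset P le u. \<exists>z\<in>Lset P le u. lessP le x y \<and> lessP le y z)"
    unfolding height_def using dimP_gt_1_iff[OF Lset_subset] by simp
  also have "\<dots> \<longleftrightarrow> (\<exists>v\<in>P. \<exists>w\<in>P. lessP le w v \<and> lessP le v u)"
  proof
    assume "\<exists>x\<in>Lset P le u. \<exists>y\<in>Lset P le u. \<exists>z\<in>Lset P le u. lessP le x y \<and> lessP le y z"
    then obtain x y z where "x \<in> P" "y \<in> P" "z \<in> P" "le z u" "lessP le x y" "lessP le y z"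
      unfolding Lset_def by blast
    then show "\<exists>v\<in>P. \<exists>w\<in>P. lessP le w v \<and> lessP le v u"
      using assms lessP_le_trans[of y z u] by blast
  next
    assume "\<exists>v\<in>P. \<exists>w\<in>P. lessP le w v \<and> lessP le v u"
    then obtain v w where vw: "v \<in> P" "w \<in> P" "lessP le w v" "lessP le v u" by blast
    then have "le w u" using assms poset_trans[of w v u] unfolding lessP_def by blast
    then show "\<exists>x\<in>Lset P le u. \<exists>y\<in>Lset P le u. \<exists>z\<in>Lset P le u. lessP le x y \<and> lessP le y z"
      using vw assms poset_refl[of u] unfolding Lset_def lessP_def by blast
  qed
  finally show ?thesis .
qed

lemma height_eq_1_iff:
  assumes "u \<in> P"
  shows "height P le u = 1 \<longleftrightarrow>
    (\<exists>v\<in>P. lessP le v u) \<and> \<not> (\<exists>v\<in>P. \<exists>w\<in>P. lessP le w v \<and> lessP le v u)"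
proof -
  have "height P le u = 1 \<longleftrightarrow> height P le u \<noteq> 0 \<and> \<not> 1 < height P le u"
    by (cases "height P le u") (auto simp: one_enat_def zero_enat_def)
  then show ?thesis using height_eq_0_iff[OF assms] height_gt_1_iff[OF assms] by blast
qed

end

section \<open>Proper \<open>K\<close>-posets with a single maximal node\<close>

locale top_K_poset =
  fixes V :: "'a set" and le :: "'a \<Rightarrow> 'a \<Rightarrow> bool" and m :: 'a
  assumes K_poset: "K_poset V le" and proper: "proper V le"
    and maxset_eq: "maxset V le = {m}" and dim_ge_1: "dimP le V \<ge> 1"
begin

lemma poset: "poset V le"
  using K_poset unfolding K_poset_def by blast

lemma V_refl: "x \<in> V \<Longrightarrow> le x x"
  using poset_refl[OF poset] .

lemma V_antisym: "x \<in> V \<Longrightarrow> y \<in> V \<Longrightarrow> le x y \<Longrightarrow> le y x \<Longrightarrow> x = y"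
  using poset_antisym[OF poset] .

lemma V_trans: "x \<in> V \<Longrightarrow> y \<in> V \<Longrightarrow> z \<in> V \<Longrightarrow> le x y \<Longrightarrow> le y z \<Longrightarrow> le x z"
  using poset_trans[OF poset] .

lemma no_chain4:
  assumes "a \<in> V" "b \<in> V" "c \<in> V" "d \<in> V" "lessP le a b" "lessP le b c" "lessP le c d"
  shows False
proof -
  have "2 < dimP le V" using dimP_gt_2_if_chain4[OF poset order_refl assms] .
  moreover have "dimP le V \<le> 2" using K_poset unfolding K_poset_def by blast
  ultimately show False by simp
qed

lemma m_in_V: "m \<in> V"
  using maxset_eq unfolding maxset_def by blast

lemma not_above_m: "v \<in> V \<Longrightarrow> \<not> lessP le m v"
  using maxset_eq unfolding maxset_def by blast

lemma le_m:
  assumes "x \<in> V"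
  shows "le x m"
proof (rule ccontr)
  have step: "\<exists>y\<in>V. lessP le u y \<and> \<not> le y m" if u: "u \<in> V" "\<not> le u m" for u
  proof -
    have "u \<noteq> m" using u V_refl by blast
    then have "u \<notin> maxset V le" using maxset_eq by blast
    then obtain y where "y \<in> V" "lessP le u y" using u unfolding maxset_def by blast
    then show ?thesis using V_trans[of u y m] u m_in_V unfolding lessP_def by blast
  qed
  assume "\<not> le x m"
  then obtain y where y: "y \<in> V" "lessP le x y" "\<not> le y m" using step assms by blast
  then obtain z where z: "z \<in> V" "lessP le y z" "\<not> le z m" using step by blast
  then obtain t where "t \<in> V" "lessP le z t" using step by blast
  then show False using no_chain4 assms y z by blast
qed

definition mins :: "'a set" where
  "mins = minset V le"

lemma mins_subset: "mins \<subseteq> V"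
  unfolding mins_def minset_def by blast

lemma finite_mins: "finite mins"
  using K_poset unfolding K_poset_def mins_def by blast

lemma mins_eqD: "a \<in> mins \<Longrightarrow> x \<in> V \<Longrightarrow> le x a \<Longrightarrow> x = a"
  unfolding mins_def minset_def lessP_def by blast

lemma not_minsD: "x \<in> V \<Longrightarrow> x \<notin> mins \<Longrightarrow> \<exists>v\<in>V. lessP le v x"
  unfolding mins_def minset_def by blast

lemma below_non_top_in_mins:
  assumes "x \<in> V" "y \<in> V" "lessP le x y" "y \<noteq> m"
  shows "x \<in> mins"
proof (rule ccontr)
  assume "x \<notin> mins"
  then obtain z where "z \<in> V" "lessP le z x" using not_minsD assms by blast
  moreover have "lessP le y m" using le_m assms unfolding lessP_def by blast
  ultimately show False using no_chain4[of z x y m] assms m_in_V by blast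
qed

lemma m_not_in_mins: "m \<notin> mins"
proof
  assume "m \<in> mins"
  obtain x y where xy: "x \<in> V" "y \<in> V" "lessP le x y"
    using dim_ge_1 dimP_pos_iff[OF poset order_refl] by (auto intro: order_less_le_trans)
  then have "lessP le x m" using lessP_le_trans[OF poset xy(1,2) m_in_V xy(3)] le_m by blast
  then show False using mins_eqD[OF \<open>m \<in> mins\<close> xy(1)] unfolding lessP_def by blast
qed

lemma exists_mins_below:
  assumes "x \<in> V"
  shows "\<exists>w\<in>mins. le w x"
proof (cases "x \<in> mins")
  case True
  then show ?thesis using V_refl assms by blast
next
  case False
  then obtain y where y: "y \<in> V" "lessP le y x" using not_minsD assms by blast
  show ?thesis
  proof (cases "x = m \<and> y \<notin> mins")
    case True
    then obtain z where "z \<in> V" "lessP le z y" using not_minsD y by blast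
    moreover have "y \<noteq> m" using y True unfolding lessP_def by blast
    ultimately show ?thesis
      using below_non_top_in_mins[of z y] V_trans[of _ y x] y assms unfolding lessP_def by blast
  next
    case False
    then show ?thesis using below_non_top_in_mins y assms unfolding lessP_def by blast
  qed
qed

text \<open>\<open>Lam\<close> is the set \<open>\<Lambda>\<^sub>V\<close> of the paper, so \<open>d\<^sub>V(m) = card Lam\<close>.\<close>

definition hubs :: "'a set" where
  "hubs = {h\<in>V. h \<noteq> m \<and> h \<notin> mins \<and> (\<exists>a\<in>mins. \<exists>b\<in>mins. a \<noteq> b \<and> le a h \<and> le b h)}"

definition singles :: "'a set" where
  "singles = {x\<in>V. x \<noteq> m \<and> x \<notin> mins \<and> x \<notin> hubs}"

definition Lam :: "'a set" where
  "Lam = hubs \<union> {w\<in>mins. \<not> (\<exists>h\<in>hubs. le w h)}"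

definition fan :: "'a \<Rightarrow> 'a set" where
  "fan w = {x\<in>singles. le w x}"

lemma V_cases:
  assumes "x \<in> V"
  obtains "x = m" | "x \<in> mins" | "x \<in> hubs" | "x \<in> singles"
  using assms unfolding singles_def by blast

lemma hubs_subset_mub:
  assumes "h \<in> hubs"
  shows "\<exists>a\<in>mins. \<exists>b\<in>mins. a \<noteq> b \<and> h \<in> mub V le {a, b}"
proof -
  obtain a b where ab: "a \<in> mins" "b \<in> mins" "a \<noteq> b" "le a h" "le b h" "h \<in> V" "h \<noteq> m"
    using assms unfolding hubs_def by blast
  have "\<not> lessP le w h" if "w \<in> V" "le a w" "le b w" for w
  proof
    assume "lessP le w h"
    then have "w \<in> mins" using below_non_top_in_mins that ab by blast
    then show False using mins_eqD[of w a] mins_eqD[of w b] that ab mins_subset by blast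
  qed
  then have "h \<in> mub V le {a, b}" using ab unfolding mub_def by blast
  then show ?thesis using ab by blast
qed

lemma finite_hubs: "finite hubs"
proof -
  have "hubs \<subseteq> (\<Union>a\<in>mins. \<Union>b\<in>mins - {a}. mub V le {a, b})"
    using hubs_subset_mub by blast
  moreover have "\<forall>a\<in>mins. \<forall>b\<in>mins. a \<noteq> b \<longrightarrow> finite (mub V le {a, b})"
    using K_poset unfolding K_poset_def mins_def by blast
  then have "finite (\<Union>a\<in>mins. \<Union>b\<in>mins - {a}. mub V le {a, b})"
    using finite_mins by auto
  ultimately show ?thesis by (rule finite_subset)
qed

lemma finite_Lam: "finite Lam"
  unfolding Lam_def using finite_hubs finite_mins by auto

lemma Lam_subset: "Lam \<subseteq> V - {m}"
  unfolding Lam_def hubs_def using mins_subset m_not_in_mins by auto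

lemma hubs_subset: "hubs \<subseteq> V - {m}"
  unfolding hubs_def by auto

lemma singles_not_in_Lam: "x \<in> singles \<Longrightarrow> x \<notin> Lam"
  unfolding singles_def Lam_def by auto

lemma Lam_above_mins:
  assumes "w \<in> mins"
  shows "\<exists>l\<in>Lam. le w l"
  using assms V_refl mins_subset unfolding Lam_def by blast

lemma Lam_nonempty: "Lam \<noteq> {}"
  using exists_mins_below[OF m_in_V] Lam_above_mins by blast

lemma singles_unique_min:
  "x \<in> singles \<Longrightarrow> a \<in> mins \<Longrightarrow> b \<in> mins \<Longrightarrow> le a x \<Longrightarrow> le b x \<Longrightarrow> a = b"
  unfolding singles_def hubs_def by blast

lemma singles_below_in_mins: "x \<in> singles \<Longrightarrow> y \<in> V \<Longrightarrow> lessP le y x \<Longrightarrow> y \<in> mins"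
  using below_non_top_in_mins unfolding singles_def by blast

lemma singles_above_eq_m: "x \<in> singles \<Longrightarrow> y \<in> V \<Longrightarrow> lessP le x y \<Longrightarrow> y = m"
  using below_non_top_in_mins unfolding singles_def by blast

lemma fan_subset_bracket:
  assumes w: "w \<in> mins" and x: "x \<in> fan w"
  shows "x \<in> bracket V le m w"
proof -
  have xs: "x \<in> singles" "le w x" using x unfolding fan_def by auto
  then have xV: "x \<in> V" "x \<noteq> m" "x \<notin> mins" unfolding singles_def by auto
  have "Gset V le x - {x} \<subseteq> {m}"
    using singles_above_eq_m[OF xs(1)] unfolding Gset_def lessP_def by blast
  moreover have "m \<in> Gset V le x - {x}"
    using xV m_in_V le_m unfolding Gset_def by blast
  ultimately have G: "Gset V le x - {x} = {m}" by blast
  have "Lset V le x - {x} \<subseteq> {w}"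
  proof
    fix y assume "y \<in> Lset V le x - {x}"
    then have y: "y \<in> V" "lessP le y x" unfolding Lset_def lessP_def by auto
    then have "y \<in> mins" using singles_below_in_mins[OF xs(1)] by blast
    then show "y \<in> {w}"
      using singles_unique_min[OF xs(1) _ w] y xs(2) unfolding lessP_def by blast
  qed
  moreover have "w \<in> Lset V le x - {x}"
    using xV xs w mins_subset unfolding Lset_def by auto
  ultimately have "Lset V le x - {x} = {w}" by blast
  with G xV show ?thesis unfolding bracket_def by blast
qed

lemma bracket_subset_fan:
  assumes w: "w \<in> mins" and u: "u \<in> bracket V le m w"
  shows "u \<in> fan w"
proof -
  have uV: "u \<in> V" and G: "Gset V le u - {u} = {m}" and L: "Lset V le u - {u} = {w}"
    using u unfolding bracket_def by auto
  have um: "u \<noteq> m" using G by (metis Diff_iff insertI1)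
  have "w \<in> Lset V le u - {u}" using L by simp
  then have wu: "le w u" "w \<noteq> u" unfolding Lset_def by auto
  have un: "u \<notin> mins" using mins_eqD[of u w] wu w mins_subset by blast
  have "u \<notin> hubs"
  proof
    assume "u \<in> hubs"
    then obtain a b where ab: "a \<in> mins" "b \<in> mins" "a \<noteq> b" "le a u" "le b u"
      unfolding hubs_def by blast
    then have "a \<in> Lset V le u - {u}" "b \<in> Lset V le u - {u}"
      using un uV mins_subset unfolding Lset_def by auto
    then have "a = w" "b = w" unfolding L by simp_all
    then show False using ab(3) by simp
  qed
  then show ?thesis using uV um un wu unfolding fan_def singles_def by simp
qed

lemma fan_eq_bracket: "w \<in> mins \<Longrightarrow> fan w = bracket V le m w"
  using fan_subset_bracket bracket_subset_fan by blast

lemma fan_infinite_eqpoll: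
  assumes w: "w \<in> mins" and ne: "fan w \<noteq> {}"
  shows "infinite (fan w)" "fan w \<approx> V"
proof -
  obtain x where "x \<in> fan w" using ne by blast
  then have x: "x \<in> V" "x \<noteq> m" "x \<notin> mins" "le w x"
    unfolding fan_def singles_def by auto
  then have "lessP le w x" "lessP le x m"
    using w le_m unfolding lessP_def by auto
  then have "infinite (bracket V le m w)"
    using K_poset m_in_V x w mins_subset unfolding K_poset_def by blast
  then show "infinite (fan w)" using fan_eq_bracket w by simp
  have "m \<in> maxset V le" "w \<in> minset V le" using maxset_eq w unfolding mins_def by auto
  then have "bracket V le m w = {} \<or> bracket V le m w \<approx> V"
    using proper unfolding proper_def by blast
  then show "fan w \<approx> V" using fan_eq_bracket w ne by simp
qed

lemma fan_nonempty:
  assumes z: "z \<in> mins" and y: "y \<in> V" "y \<noteq> m" "lessP le z y"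
  shows "fan z \<noteq> {}"
proof (cases "y \<in> hubs")
  case True
  then have "lessP le y m" using le_m y unfolding lessP_def by blast
  then have "infinite (bracket V le m z)"
    using K_poset m_in_V y z mins_subset unfolding K_poset_def by blast
  then show ?thesis using fan_eq_bracket[OF z] by auto
next
  case False
  moreover have "y \<notin> mins" using mins_eqD[of y z] y z mins_subset by (auto simp: lessP_def)
  ultimately have "y \<in> singles" using y unfolding singles_def by blast
  then show ?thesis using y unfolding fan_def lessP_def by blast
qed

lemma fan_split:
  assumes "w \<in> mins" "fan w \<noteq> {}"
  obtains f where "\<And>x. x \<in> fan w \<Longrightarrow> f x \<in> Lam \<and> le w (f x)"
    and "\<And>l. l \<in> Lam \<Longrightarrow> le w l \<Longrightarrow> {x\<in>fan w. f x = l} \<approx> fan w"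
proof -
  have split: "infinite (fan w)" "finite {l\<in>Lam. le w l}" "{l\<in>Lam. le w l} \<noteq> {}"
    using fan_infinite_eqpoll[OF assms] finite_Lam Lam_above_mins[OF assms(1)] by auto
  obtain f where "\<And>x. x \<in> fan w \<Longrightarrow> f x \<in> {l\<in>Lam. le w l}"
    and "\<And>l. l \<in> {l\<in>Lam. le w l} \<Longrightarrow> {x\<in>fan w. f x = l} \<approx> fan w"
    using infinite_split_eqpoll[OF split] by blast
  then show ?thesis using that by blast
qed

lemma exists_target:
  obtains tgt where "\<And>x. x \<in> singles \<Longrightarrow> tgt x \<in> Lam"
    and "\<And>x w. x \<in> singles \<Longrightarrow> w \<in> mins \<Longrightarrow> le w x \<Longrightarrow> le w (tgt x)"
    and "\<And>w l. w \<in> mins \<Longrightarrow> l \<in> Lam \<Longrightarrow> le w l \<Longrightarrow> fan w \<noteq> {} \<Longrightarrow>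
           {x\<in>fan w. tgt x = l} \<approx> fan w"
proof -
  have "\<forall>w. \<exists>f. w \<in> mins \<and> fan w \<noteq> {} \<longrightarrow> (\<forall>x\<in>fan w. f x \<in> Lam \<and> le w (f x))
      \<and> (\<forall>l\<in>Lam. le w l \<longrightarrow> {x\<in>fan w. f x = l} \<approx> fan w)"
  proof
    fix w
    show "\<exists>f. w \<in> mins \<and> fan w \<noteq> {} \<longrightarrow> (\<forall>x\<in>fan w. f x \<in> Lam \<and> le w (f x))
        \<and> (\<forall>l\<in>Lam. le w l \<longrightarrow> {x\<in>fan w. f x = l} \<approx> fan w)"
      by (cases "w \<in> mins \<and> fan w \<noteq> {}") (auto elim!: fan_split)
  qed
  from choice[OF this] obtain F where F: "\<And>w. w \<in> mins \<Longrightarrow> fan w \<noteq> {} \<Longrightarrow>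
      (\<forall>x\<in>fan w. F w x \<in> Lam \<and> le w (F w x))
      \<and> (\<forall>l\<in>Lam. le w l \<longrightarrow> {x\<in>fan w. F w x = l} \<approx> fan w)"
    by blast
  define tgt where "tgt x = F (THE w. w \<in> mins \<and> le w x) x" for x
  have tgt_fan: "tgt x = F w x" if "x \<in> fan w" "w \<in> mins" for x w
  proof -
    have "(THE w. w \<in> mins \<and> le w x) = w"
      using that singles_unique_min unfolding fan_def by blast
    then show ?thesis unfolding tgt_def by simp
  qed
  show ?thesis
  proof
    fix x assume x: "x \<in> singles"
    then obtain w where w: "w \<in> mins" "le w x"
      using exists_mins_below unfolding singles_def by blast
    then have "x \<in> fan w" using x unfolding fan_def by blast
    then have tgt: "tgt x \<in> Lam" "le w (tgt x)" using F[OF w(1)] tgt_fan[OF _ w(1)] by auto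
    then show "tgt x \<in> Lam" by blast
    show "le w' (tgt x)" if "w' \<in> mins" "le w' x" for w'
      using tgt singles_unique_min[OF x that(1) w(1) that(2) w(2)] by blast
  next
    fix w l assume "w \<in> mins" "l \<in> Lam" "le w l" "fan w \<noteq> {}"
    moreover have "{x\<in>fan w. tgt x = l} = {x\<in>fan w. F w x = l}"
      using tgt_fan \<open>w \<in> mins\<close> by auto
    ultimately show "{x\<in>fan w. tgt x = l} \<approx> fan w" using F by auto
  qed
qed

end

section \<open>The splitting\<close>

text \<open>The splitting keeps \<open>V - {m}\<close> (tag 0) and replaces \<open>m\<close> by a copy \<open>(l, 1)\<close> for each
\<open>l \<in> Lam\<close>; below \<open>(l, 1)\<close> lies the \<open>cone\<close> of \<open>l\<close>: the nodes below \<open>l\<close> and the singles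
sent to \<open>l\<close> by \<open>tgt\<close>.\<close>

locale splitting_construction = top_K_poset +
  fixes tgt :: "'a \<Rightarrow> 'a"
  assumes tgt_in_Lam: "x \<in> singles \<Longrightarrow> tgt x \<in> Lam"
    and le_tgt: "x \<in> singles \<Longrightarrow> w \<in> mins \<Longrightarrow> le w x \<Longrightarrow> le w (tgt x)"
    and tgt_fibre_eqpoll:
      "w \<in> mins \<Longrightarrow> l \<in> Lam \<Longrightarrow> le w l \<Longrightarrow> fan w \<noteq> {} \<Longrightarrow> {x\<in>fan w. tgt x = l} \<approx> fan w"
begin

definition cone :: "'a \<Rightarrow> 'a set" where
  "cone l = {x\<in>V. x \<noteq> m \<and> le x l} \<union> {x\<in>singles. tgt x = l}"

definition U :: "('a \<times> nat) set" where
  "U = (\<lambda>x. (x, 0)) ` (V - {m}) \<union> (\<lambda>l. (l, 1)) ` Lam"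

definition leU :: "'a \<times> nat \<Rightarrow> 'a \<times> nat \<Rightarrow> bool" where
  "leU p q = (if snd p = 0 \<and> snd q = 0 then le (fst p) (fst q)
     else if snd p = 0 \<and> snd q = 1 then fst p \<in> cone (fst q) else p = q)"

definition phi :: "'a \<times> nat \<Rightarrow> 'a" where
  "phi p = (if snd p = 0 then fst p else m)"

definition M :: "('a \<times> nat) set" where
  "M = (\<lambda>l. (l, 1)) ` Lam"

lemma leU_simps [simp]:
  "leU (x, 0) (y, 0) = le x y"
  "leU (x, 0) (l, Suc 0) = (x \<in> cone l)"
  "leU (l, Suc 0) (y, 0) = False"
  "leU (l, Suc 0) (l', Suc 0) = (l = l')"
  unfolding leU_def by auto

lemma lessU_simps [simp]:
  "lessP leU (x, 0) (y, 0) = lessP le x y"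
  "lessP leU (x, 0) (l, Suc 0) = (x \<in> cone l)"
  "lessP leU (l, Suc 0) q = False"
  unfolding lessP_def leU_def by auto

lemma phi_simps [simp]: "phi (x, 0) = x" "phi (l, Suc 0) = m"
  unfolding phi_def by auto

lemma U_cases [consumes 1, case_names old copy]:
  assumes "p \<in> U"
  obtains (old) x where "p = (x, 0)" "x \<in> V" "x \<noteq> m"
    | (copy) l where "p = (l, 1)" "l \<in> Lam"
  using assms unfolding U_def by blast

lemma old_in_U_iff [simp]: "(x, 0) \<in> U \<longleftrightarrow> x \<in> V \<and> x \<noteq> m"
  unfolding U_def by auto

lemma copy_in_U_iff [simp]: "(l, Suc 0) \<in> U \<longleftrightarrow> l \<in> Lam"
  unfolding U_def by auto

lemma finite_M: "finite M"
  unfolding M_def using finite_Lam by blast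

lemma cone_subset: "cone l \<subseteq> V - {m}"
  unfolding cone_def singles_def by auto

lemma cone_down_closed:
  assumes y: "y \<in> cone l" and x: "x \<in> V" "le x y" and l: "l \<in> Lam"
  shows "x \<in> cone l"
proof -
  have yV: "y \<in> V" "y \<noteq> m" using cone_subset y by auto
  have xm: "x \<noteq> m" using not_above_m[of y] x yV unfolding lessP_def by blast
  have "le x l" if "x \<noteq> y"
  proof (cases "le y l")
    case True
    then show ?thesis using V_trans[of x y l] x yV l Lam_subset by blast
  next
    case False
    then have y': "y \<in> singles" "tgt y = l" using y unfolding cone_def by auto
    then have "x \<in> mins"
      using singles_below_in_mins[OF y'(1) x(1)] x that unfolding lessP_def by blast
    then show ?thesis using le_tgt[OF y'(1) _ x(2)] y' by blast
  qed
  then show ?thesis using x xm y unfolding cone_def by blast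
qed

lemma self_in_cone: "l \<in> Lam \<Longrightarrow> l \<in> cone l"
  using Lam_subset V_refl unfolding cone_def by blast

lemma mins_in_cone_iff: "a \<in> mins \<Longrightarrow> a \<in> cone l \<longleftrightarrow> le a l"
  using mins_subset m_not_in_mins unfolding cone_def singles_def by auto

lemma singles_in_cone_iff:
  assumes "x \<in> singles" "l \<in> Lam"
  shows "x \<in> cone l \<longleftrightarrow> tgt x = l"
proof -
  have "\<not> lessP le x l"
    using singles_above_eq_m[OF assms(1)] assms Lam_subset by blast
  moreover have "x \<noteq> l" using singles_not_in_Lam assms by blast
  ultimately show ?thesis using assms unfolding cone_def lessP_def by blast
qed

lemma hubs_in_cone_eq:
  assumes "h \<in> hubs" "l \<in> Lam" "h \<in> cone l"
  shows "h = l"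
proof (rule ccontr)
  assume "h \<noteq> l"
  moreover have "le h l" using assms unfolding cone_def singles_def by blast
  ultimately have "h \<in> mins"
    using below_non_top_in_mins[of h l] assms hubs_subset Lam_subset unfolding lessP_def by blast
  then show False using assms unfolding hubs_def by blast
qed

lemma exists_cone:
  assumes "x \<in> V" "x \<noteq> m"
  shows "\<exists>l\<in>Lam. x \<in> cone l"
  using assms
proof (cases rule: V_cases)
  case 2
  then show ?thesis using Lam_above_mins mins_in_cone_iff by blast
next
  case 3
  then show ?thesis using self_in_cone unfolding Lam_def by blast
next
  case 4
  then show ?thesis using tgt_in_Lam singles_in_cone_iff by blast
qed simp

lemma poset_U: "poset U leU"
proof -
  have "leU p p" if "p \<in> U" for p
    using that by (cases rule: U_cases) (auto simp: V_refl)
  moreover have "p = q" if "p \<in> U" "q \<in> U" "leU p q" "leU q p" for p q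
    using that by (elim U_cases) (auto intro: V_antisym)
  moreover have "leU p r" if "p \<in> U" "q \<in> U" "r \<in> U" "leU p q" "leU q r" for p q r
    using that by (elim U_cases) (auto intro: V_trans cone_down_closed)
  ultimately show ?thesis unfolding poset_def by blast
qed

lemma below_old_obtain:
  assumes "q \<in> U" "leU q (x, 0)"
  obtains y where "q = (y, 0)" "y \<in> V" "le y x"
  using assms by (cases rule: U_cases) auto

lemma maxset_U: "maxset U leU = M"
proof (intro equalityI subsetI)
  fix p assume p: "p \<in> maxset U leU"
  then have "p \<in> U" unfolding maxset_def by blast
  then show "p \<in> M"
  proof (cases rule: U_cases)
    case (old x)
    then obtain l where "l \<in> Lam" "x \<in> cone l" using exists_cone by blast
    then have "(l, 1) \<in> U" "lessP leU p (l, 1)" using old by auto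
    then show ?thesis using p unfolding maxset_def by blast
  qed (auto simp: M_def)
next
  fix p assume "p \<in> M"
  then show "p \<in> maxset U leU"
    unfolding M_def maxset_def by (auto elim: U_cases)
qed

lemma minset_U: "minset U leU = (\<lambda>a. (a, 0::nat)) ` mins"
proof (intro equalityI subsetI)
  fix p assume p: "p \<in> minset U leU"
  then have "p \<in> U" and no_below: "\<And>q. q \<in> U \<Longrightarrow> \<not> lessP leU q p"
    unfolding minset_def by blast+
  then show "p \<in> (\<lambda>a. (a, 0)) ` mins"
  proof (cases rule: U_cases)
    case (old x)
    have "x \<in> mins"
    proof (rule ccontr)
      assume "x \<notin> mins"
      then obtain v where "v \<in> V" "lessP le v x" using not_minsD old by blast
      moreover have "v \<noteq> m" using not_above_m old calculation by blast
      ultimately show False using no_below[of "(v, 0)"] old by simp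
    qed
    then show ?thesis using old by blast
  next
    case (copy l)
    then show ?thesis using no_below[of "(l, 0)"] self_in_cone Lam_subset by auto
  qed
next
  fix p assume "p \<in> (\<lambda>a. (a, 0::nat)) ` mins"
  then obtain a where a: "p = (a, 0)" "a \<in> mins" by blast
  have "\<not> lessP leU q p" if "q \<in> U" for q
    using that a mins_eqD[OF a(2)] unfolding lessP_def by (auto elim: below_old_obtain)
  then show "p \<in> minset U leU"
    using a mins_subset m_not_in_mins unfolding minset_def by auto
qed

lemma phi_mono: "p \<in> U \<Longrightarrow> q \<in> U \<Longrightarrow> leU p q \<Longrightarrow> le (phi p) (phi q)"
  by (elim U_cases) (auto simp: le_m V_refl m_in_V)

lemma phi_inj_comparable:
  "p \<in> U \<Longrightarrow> q \<in> U \<Longrightarrow> leU p q \<or> leU q p \<Longrightarrow> phi p = phi q \<Longrightarrow> p = q"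
  by (elim U_cases) auto

lemma phi_image: "phi ` U = V"
proof (intro equalityI subsetI)
  fix v assume "v \<in> phi ` U"
  then show "v \<in> V" using m_in_V by (auto elim: U_cases)
next
  fix v assume v: "v \<in> V"
  obtain l where "l \<in> Lam" using Lam_nonempty by blast
  show "v \<in> phi ` U"
  proof (cases "v = m")
    case True
    then show ?thesis using \<open>l \<in> Lam\<close> image_eqI[of v phi "(l, 1)"] by simp
  next
    case False
    then show ?thesis using v image_eqI[of v phi "(v, 0)"] by simp
  qed
qed

lemma dimP_U: "dimP leU U \<le> 2"
proof -
  have "dimP leU U \<le> dimP le V"
  proof (rule dimP_le_dimP_chain_map[where f = phi])
    fix C assume "C \<subseteq> U" "is_chainP leU C"
    then show "inj_on phi C \<and> is_chainP le (phi ` C)"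
      using phi_inj_comparable phi_mono unfolding is_chainP_def inj_on_def by blast
  qed (use phi_image in simp)
  then show ?thesis using K_poset unfolding K_poset_def by (blast intro: order_trans)
qed

lemma no_chain3_below_old:
  assumes "u \<in> V" "u \<noteq> m" "q \<in> U" "w \<in> U" "lessP leU w q" "lessP leU q (u, 0)"
  shows False
proof -
  obtain y where y: "q = (y, 0)" "y \<in> V" "le y u"
    using below_old_obtain[OF assms(3)] assms(6) unfolding lessP_def by blast
  obtain z where z: "w = (z, 0)" "z \<in> V" "le z y"
    using below_old_obtain[OF assms(4)] assms(5) y unfolding lessP_def by blast
  have "lessP le y u" "lessP le z y" using assms(5,6) y z by simp_all
  then have "y \<in> mins" using below_non_top_in_mins y assms by blast
  then show False using mins_eqD[of y z] z \<open>lessP le z y\<close> unfolding lessP_def by blast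
qed

lemma Hset_U_2_subset: "Hset U leU 2 \<subseteq> M"
proof
  fix p assume "p \<in> Hset U leU 2"
  then have p: "p \<in> U" "1 < height U leU p" unfolding Hset_def by (auto simp: one_enat_def)
  then obtain v w where vw: "v \<in> U" "w \<in> U" "lessP leU w v" "lessP leU v p"
    using height_gt_1_iff[OF poset_U] by blast
  from p(1) show "p \<in> M"
  proof (cases rule: U_cases)
    case (old x)
    then show ?thesis using no_chain3_below_old vw by blast
  qed (simp add: M_def)
qed

lemma finite_mub_U:
  assumes "a \<in> mins" "b \<in> mins" "a \<noteq> b"
  shows "finite (mub U leU {(a, 0), (b, 0)})"
proof -
  have "mub U leU {(a, 0), (b, 0)} \<subseteq> (\<lambda>x. (x, 0)) ` mub V le {a, b} \<union> M"
  proof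
    fix p assume p: "p \<in> mub U leU {(a, 0), (b, 0)}"
    then have "p \<in> U" and ub: "leU (a, 0) p" "leU (b, 0) p"
      and no_less: "\<And>q. q \<in> U \<Longrightarrow> leU (a, 0) q \<Longrightarrow> leU (b, 0) q \<Longrightarrow> \<not> lessP leU q p"
      unfolding mub_def by auto
    then show "p \<in> (\<lambda>x. (x, 0)) ` mub V le {a, b} \<union> M"
    proof (cases rule: U_cases)
      case (old x)
      have "\<not> lessP le w x" if "w \<in> V" "le a w" "le b w" for w
        using no_less[of "(w, 0)"] that not_above_m[of x] old unfolding lessP_def by auto
      then have "x \<in> mub V le {a, b}" using ub old unfolding mub_def by auto
      then show ?thesis using old by blast
    qed (auto simp: M_def)
  qed
  moreover have "finite (mub V le {a, b})"
    using K_poset assms unfolding K_poset_def mins_def by blast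
  ultimately show ?thesis using finite_M by (meson finite_Un finite_imageI finite_subset)
qed

lemma Gset_U_singles:
  assumes x: "x \<in> singles"
  shows "Gset U leU (x, 0) - {(x, 0)} = {(tgt x, 1)}"
proof (intro equalityI subsetI)
  fix q assume "q \<in> Gset U leU (x, 0) - {(x, 0)}"
  then have "q \<in> U" "leU (x, 0) q" "q \<noteq> (x, 0)" unfolding Gset_def by auto
  then show "q \<in> {(tgt x, 1)}"
    using singles_above_eq_m[OF x] singles_in_cone_iff[OF x]
    by (cases rule: U_cases) (auto simp: lessP_def)
next
  fix q assume "q \<in> {(tgt x, 1::nat)}"
  then show "q \<in> Gset U leU (x, 0) - {(x, 0)}"
    using x tgt_in_Lam singles_in_cone_iff unfolding Gset_def by auto
qed

lemma Lset_U_singles: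
  assumes x: "x \<in> singles" and z: "z \<in> mins" "le z x"
  shows "Lset U leU (x, 0) - {(x, 0)} = {(z, 0)}"
proof (intro equalityI subsetI)
  fix q assume "q \<in> Lset U leU (x, 0) - {(x, 0)}"
  then have q: "q \<in> U" "leU q (x, 0)" "q \<noteq> (x, 0)" unfolding Lset_def by auto
  obtain y where y: "q = (y, 0)" "y \<in> V" "le y x"
    using below_old_obtain[OF q(1,2)] by blast
  then have "lessP le y x" using q(3) unfolding lessP_def by blast
  then have "y \<in> mins" using singles_below_in_mins[OF x y(2)] by blast
  then have "y = z" using singles_unique_min[OF x _ z(1) y(3) z(2)] by blast
  then show "q \<in> {(z, 0)}" using y by simp
next
  fix q assume "q \<in> {(z, 0::nat)}"
  moreover have "z \<noteq> x" "z \<in> V" "z \<noteq> m"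
    using x z mins_subset m_not_in_mins unfolding singles_def by auto
  moreover have "x \<in> V" "x \<noteq> m" using x unfolding singles_def by auto
  ultimately show "q \<in> Lset U leU (x, 0) - {(x, 0)}" using z(2) unfolding Lset_def by simp
qed

lemma bracket_U:
  assumes l: "l \<in> Lam" and z: "z \<in> mins"
  shows "bracket U leU (l, 1) (z, 0) = (\<lambda>x. (x, 0)) ` {x\<in>fan z. tgt x = l}"
proof (intro equalityI subsetI)
  fix p assume "p \<in> bracket U leU (l, 1) (z, 0)"
  then have p: "p \<in> U" and G: "Gset U leU p - {p} = {(l, 1)}"
    and L: "Lset U leU p - {p} = {(z, 0)}" unfolding bracket_def by auto
  have "leU p (l, 1)" "p \<noteq> (l, 1)" using G unfolding Gset_def by auto
  from p obtain x where x: "p = (x, 0)" "x \<in> V" "x \<noteq> m"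
  proof (cases rule: U_cases)
    case (copy l')
    then show ?thesis using \<open>leU p (l, 1)\<close> \<open>p \<noteq> (l, 1)\<close> by simp
  qed
  have "(z, 0) \<in> Lset U leU p - {p}" using L by simp
  then have zx: "le z x" "z \<noteq> x" using x(1) unfolding Lset_def by auto
  then have xn: "x \<notin> mins" using mins_eqD[of x z] z mins_subset by blast
  have "x \<notin> hubs"
  proof
    assume "x \<in> hubs"
    then obtain a b where ab: "a \<in> mins" "b \<in> mins" "a \<noteq> b" "le a x" "le b x"
      unfolding hubs_def by blast
    have "a \<noteq> x" "b \<noteq> x" "a \<in> V" "b \<in> V" "a \<noteq> m" "b \<noteq> m"
      using ab xn mins_subset m_not_in_mins by auto
    then have "(a, 0) \<in> Lset U leU p - {p}" "(b, 0) \<in> Lset U leU p - {p}"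
      using ab(4,5) x(1) unfolding Lset_def by simp_all
    then have "a = z" "b = z" unfolding L by simp_all
    then show False using ab(3) by simp
  qed
  then have xs: "x \<in> singles" using x xn unfolding singles_def by blast
  have "(tgt x, 1) = (l, 1)" using G Gset_U_singles[OF xs] unfolding x(1) by blast
  then show "p \<in> (\<lambda>x. (x, 0)) ` {x\<in>fan z. tgt x = l}"
    using x xs zx unfolding fan_def by blast
next
  fix p assume "p \<in> (\<lambda>x. (x, 0::nat)) ` {x\<in>fan z. tgt x = l}"
  then obtain x where x: "p = (x, 0)" "x \<in> singles" "le z x" "tgt x = l"
    unfolding fan_def by blast
  moreover have "p \<in> U" using x unfolding singles_def by simp
  ultimately show "p \<in> bracket U leU (l, 1) (z, 0)"
    using Gset_U_singles[OF x(2)] Lset_U_singles[OF x(2) z x(3)] unfolding bracket_def by simp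
qed

lemma fibre_infinite_eqpoll:
  assumes l: "l \<in> Lam" and z: "z \<in> mins" and ne: "{x\<in>fan z. tgt x = l} \<noteq> {}"
  shows "infinite {x\<in>fan z. tgt x = l}" "{x\<in>fan z. tgt x = l} \<approx> V"
proof -
  obtain x where x: "x \<in> fan z" "tgt x = l" using ne by blast
  then have "le z l" using le_tgt[OF _ z] unfolding fan_def by blast
  then have e: "{x\<in>fan z. tgt x = l} \<approx> fan z" using tgt_fibre_eqpoll[OF z l] x by blast
  then show "infinite {x\<in>fan z. tgt x = l}"
    using fan_infinite_eqpoll(1)[OF z] x eqpoll_finite_iff by blast
  show "{x\<in>fan z. tgt x = l} \<approx> V"
    using eqpoll_trans[OF e fan_infinite_eqpoll(2)[OF z]] x by blast
qed

lemma bracket_U_infinite: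
  assumes "u \<in> U" "v \<in> U" "w \<in> U" "lessP leU v u" "lessP leU w v"
  shows "infinite (bracket U leU u w)"
  using assms(1)
proof (cases rule: U_cases)
  case (old x)
  then show ?thesis using no_chain3_below_old assms by blast
next
  case (copy l)
  obtain y where y: "v = (y, 0)" "y \<in> V" "y \<in> cone l"
    using assms(2,4) copy by (cases rule: U_cases) auto
  obtain z where z: "w = (z, 0)" "z \<in> V" "lessP le z y"
    using below_old_obtain[OF assms(3)] assms(5) y unfolding lessP_def by auto
  have zm: "z \<in> mins" using below_non_top_in_mins[OF z(2) y(2) z(3)] y cone_subset by blast
  have zl: "le z l"
    using cone_down_closed[OF y(3) z(2) _ copy(2)] z(3) mins_in_cone_iff[OF zm]
    unfolding lessP_def by blast
  have "fan z \<noteq> {}" using fan_nonempty[OF zm] y z cone_subset by blast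
  then have "infinite {x\<in>fan z. tgt x = l}"
    using tgt_fibre_eqpoll[OF zm copy(2) zl] fan_infinite_eqpoll(1)[OF zm] eqpoll_finite_iff
    by blast
  then show ?thesis
    using bracket_U[OF copy(2) zm] copy z finite_imageD[of "\<lambda>x. (x, 0::nat)"]
    by (auto simp: inj_on_def)
qed

lemma U_eqpoll_V:
  assumes "infinite V"
  shows "U \<approx> V"
proof -
  have inj: "inj_on (\<lambda>x. (x, 0::nat)) (V - {m})" by (auto simp: inj_on_def)
  have "U = (\<lambda>x. (x, 0)) ` (V - {m}) \<union> M" unfolding U_def M_def by simp
  also have "\<dots> \<approx> (\<lambda>x. (x, 0::nat)) ` (V - {m})"
    using assms inj finite_M by (intro infinite_Un_finite_eqpoll) (auto dest: finite_imageD)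
  also have "\<dots> \<approx> V - {m}" using inj by (rule inj_on_image_eqpoll_self)
  also have "V - {m} \<approx> V"
    using infinite_insert_eqpoll[of "V - {m}" m] assms m_in_V eqpoll_sym
    by (simp add: insert_absorb)
  finally show ?thesis .
qed

lemma K_poset_U: "K_poset U leU"
  unfolding K_poset_def
proof (intro conjI)
  show "finite (minset U leU)" unfolding minset_U using finite_mins by blast
  show "finite (Hset U leU 2)" using Hset_U_2_subset finite_M by (rule finite_subset)
  show "\<forall>u\<in>minset U leU. \<forall>v\<in>minset U leU. u \<noteq> v \<longrightarrow> finite (mub U leU {u, v})"
    unfolding minset_U using finite_mub_U by blast
  show "\<forall>u\<in>U. \<forall>v\<in>U. \<forall>w\<in>U. lessP leU v u \<and> lessP leU w v \<longrightarrow> infinite (bracket U leU u w)"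
    using bracket_U_infinite by blast
qed (fact poset_U dimP_U)+

lemma proper_U: "proper U leU"
  unfolding proper_def
proof (intro ballI)
  fix u w assume "u \<in> maxset U leU" "w \<in> minset U leU"
  then obtain l z where lz: "u = (l, 1)" "l \<in> Lam" "w = (z, 0)" "z \<in> mins"
    unfolding maxset_U minset_U M_def by blast
  let ?F = "{x\<in>fan z. tgt x = l}"
  have b: "bracket U leU u w = (\<lambda>x. (x, 0)) ` ?F" using bracket_U lz by simp
  show "bracket U leU u w = {} \<or> bracket U leU u w \<approx> U"
  proof (cases "?F = {}")
    case False
    have "?F \<subseteq> V" unfolding fan_def singles_def by blast
    then have "infinite V" using fibre_infinite_eqpoll(1)[OF lz(2,4) False] finite_subset by blast
    have "bracket U leU u w \<approx> ?F"
      unfolding b by (rule inj_on_image_eqpoll_self) (auto simp: inj_on_def)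
    also have "?F \<approx> V" using fibre_infinite_eqpoll(2)[OF lz(2,4) False] .
    also have "V \<approx> U" using U_eqpoll_V[OF \<open>infinite V\<close>] by (rule eqpoll_sym)
    finally show ?thesis ..
  qed (simp add: b)
qed

lemma splitting_with_U: "splitting_with U leU V le m phi M"
  unfolding splitting_with_def
proof (intro conjI)
  show "m \<in> maxset V le" using maxset_eq by simp
  show "0 < height V le m"
    using height_pos_iff[OF poset m_in_V] not_minsD[OF m_in_V m_not_in_mins] by blast
  show "finite M" by (rule finite_M)
  show "M \<noteq> {}" using Lam_nonempty unfolding M_def by blast
  show "M \<subseteq> maxset U leU" using maxset_U by simp
  show "\<forall>p\<in>M. 0 < height U leU p"
  proof
    fix p assume "p \<in> M"
    then obtain l where l: "p = (l, 1)" "l \<in> Lam" unfolding M_def by blast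
    then have "(l, 0) \<in> U" "lessP leU (l, 0) p" using Lam_subset self_in_cone by auto
    moreover have "p \<in> U" using l by simp
    ultimately show "0 < height U leU p" using height_pos_iff[OF poset_U] by blast
  qed
  show "phi ` U = V" by (rule phi_image)
  show "\<forall>p\<in>U. \<forall>q\<in>U. leU p q \<longrightarrow> le (phi p) (phi q)" using phi_mono by blast
  show "{p\<in>U. phi p = m} = M"
    unfolding M_def by (auto elim: U_cases)
  show "\<forall>v\<in>V. v \<noteq> m \<longrightarrow> card {p\<in>U. phi p = v} = 1"
  proof (intro ballI impI)
    fix v assume "v \<in> V" "v \<noteq> m"
    then have "{p\<in>U. phi p = v} = {(v, 0)}" by (auto elim: U_cases)
    then show "card {p\<in>U. phi p = v} = 1" by simp
  qed
  show "\<forall>p\<in>U. \<forall>y\<in>V. le (phi p) y \<longrightarrow> (\<exists>q\<in>U. leU p q \<and> phi q = y)"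
  proof (intro ballI impI)
    fix p y assume p: "p \<in> U" and y: "y \<in> V" and py: "le (phi p) y"
    from p show "\<exists>q\<in>U. leU p q \<and> phi q = y"
    proof (cases rule: U_cases)
      case (old x)
      show ?thesis
      proof (cases "y = m")
        case True
        obtain l where "l \<in> Lam" "x \<in> cone l" using exists_cone old by blast
        then show ?thesis using old True by (intro bexI[of _ "(l, 1)"]) auto
      next
        case False
        then show ?thesis using old py y by (intro bexI[of _ "(y, 0)"]) auto
      qed
    next
      case (copy l)
      then have "y = m" using py not_above_m[OF y] unfolding lessP_def by auto
      then show ?thesis using p copy by (intro bexI[of _ p]) auto
    qed
  qed
qed

section \<open>The value of \<open>d\<close> at the copies of \<open>m\<close>\<close>

lemma Lset_copy_cases:
  assumes "q \<in> Lset U leU (l, 1)"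
  obtains "q = (l, 1)" | x where "q = (x, 0)" "x \<in> cone l"
  using assms unfolding Lset_def by (auto elim: U_cases)

lemma old_in_Lset_copy_iff: "(x, 0) \<in> Lset U leU (l, 1) \<longleftrightarrow> x \<in> cone l"
  using cone_subset unfolding Lset_def by auto

lemma poset_Lset_copy: "poset (Lset U leU (l, 1)) leU"
  using poset_subset[OF poset_U Lset_subset] .

lemma nothing_below_mins_U: "a \<in> mins \<Longrightarrow> q \<in> U \<Longrightarrow> \<not> lessP leU q (a, 0)"
  using minset_U unfolding minset_def by blast

lemma minset_Lset_copy:
  assumes l: "l \<in> Lam"
  shows "minset (Lset U leU (l, 1)) leU = (\<lambda>a. (a, 0::nat)) ` {a\<in>mins. le a l}"
proof (intro equalityI subsetI)
  fix v assume v: "v \<in> minset (Lset U leU (l, 1)) leU"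
  then have vW: "v \<in> Lset U leU (l, 1)"
    and no_below: "\<And>q. q \<in> Lset U leU (l, 1) \<Longrightarrow> \<not> lessP leU q v"
    unfolding minset_def by blast+
  from vW show "v \<in> (\<lambda>a. (a, 0)) ` {a\<in>mins. le a l}"
  proof (cases rule: Lset_copy_cases)
    case 1
    then show ?thesis using no_below[of "(l, 0)"] old_in_Lset_copy_iff self_in_cone l by simp
  next
    case (2 x)
    have "x \<in> mins"
    proof (rule ccontr)
      assume "x \<notin> mins"
      then obtain y where y: "y \<in> V" "lessP le y x" using not_minsD 2 cone_subset by blast
      then have "y \<in> cone l" using cone_down_closed[OF 2(2) y(1) _ l] unfolding lessP_def by blast
      then show False using no_below[of "(y, 0)"] old_in_Lset_copy_iff 2 y by simp
    qed
    then show ?thesis using 2 mins_in_cone_iff by blast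
  qed
next
  fix v assume "v \<in> (\<lambda>a. (a, 0::nat)) ` {a\<in>mins. le a l}"
  then obtain a where a: "v = (a, 0)" "a \<in> mins" "le a l" by blast
  then have "v \<in> Lset U leU (l, 1)" using old_in_Lset_copy_iff mins_in_cone_iff by blast
  then show "v \<in> minset (Lset U leU (l, 1)) leU"
    using nothing_below_mins_U[OF a(2)] a(1) Lset_subset[of U leU "(l, 1)"]
    unfolding minset_def by blast
qed

lemma mins_not_in_Hset_1_Lset_copy:
  assumes "a \<in> mins"
  shows "(a, 0) \<notin> Hset (Lset U leU (l, 1)) leU 1"
proof
  assume "(a, 0) \<in> Hset (Lset U leU (l, 1)) leU 1"
  then have aW: "(a, 0) \<in> Lset U leU (l, 1)"
    and "height (Lset U leU (l, 1)) leU (a, 0) = 1" unfolding Hset_def by (auto simp: one_enat_def)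
  moreover have "height (Lset U leU (l, 1)) leU (a, 0) = 0"
    using height_eq_0_iff[OF poset_Lset_copy aW] nothing_below_mins_U[OF assms]
      Lset_subset[of U leU "(l, 1)"] by blast
  ultimately show False by simp
qed

lemma hubs_in_Hset_1_Lset_copy:
  assumes l: "l \<in> Lam" "l \<in> hubs"
  shows "(l, 0) \<in> Hset (Lset U leU (l, 1)) leU 1"
proof -
  have lW: "(l, 0) \<in> Lset U leU (l, 1)" using old_in_Lset_copy_iff self_in_cone l by blast
  obtain a where a: "a \<in> mins" "le a l" "a \<noteq> l" using l(2) unfolding hubs_def by blast
  then have "(a, 0) \<in> Lset U leU (l, 1)" "lessP leU (a, 0) (l, 0)"
    using old_in_Lset_copy_iff mins_in_cone_iff unfolding lessP_def by auto
  moreover have "\<not> (\<exists>v\<in>Lset U leU (l, 1). \<exists>w\<in>Lset U leU (l, 1). lessP leU w v \<and> lessP leU v (l, 0))"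
    using no_chain3_below_old[of l] Lam_subset l Lset_subset[of U leU "(l, 1)"] by blast
  ultimately have "height (Lset U leU (l, 1)) leU (l, 0) = 1"
    using height_eq_1_iff[OF poset_Lset_copy lW] by blast
  then show ?thesis using lW unfolding Hset_def by (simp add: one_enat_def)
qed

lemma calH_Lset_copy_subset:
  assumes l: "l \<in> Lam"
  shows "calH (Lset U leU (l, 1)) leU - {(l, 1)} \<subseteq> insert (l, 0) ((\<lambda>a. (a, 0)) ` {a\<in>mins. le a l})"
proof
  let ?W = "Lset U leU (l, 1)"
  fix q assume q: "q \<in> calH ?W leU - {(l, 1)}"
  consider "q \<in> minset ?W leU"
    | a b where "q \<in> ?W" "a \<in> mins" "b \<in> mins" "a \<noteq> b" "leU (a, 0) q" "leU (b, 0) q"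
    using q unfolding calH_def Hset_def minset_Lset_copy[OF l] by blast
  then show "q \<in> insert (l, 0) ((\<lambda>a. (a, 0)) ` {a\<in>mins. le a l})"
  proof cases
    case 1
    then show ?thesis unfolding minset_Lset_copy[OF l] by blast
  next
    case (2 a b)
    from 2(1) show ?thesis
    proof (cases rule: Lset_copy_cases)
      case (2 x)
      with \<open>leU (a, 0) q\<close> \<open>leU (b, 0) q\<close> have "le a x" "le b x" by simp_all
      then have "x \<notin> mins" using mins_eqD[of x a] mins_eqD[of x b] 2 \<open>a \<noteq> b\<close> \<open>a \<in> mins\<close>
          \<open>b \<in> mins\<close> mins_subset by blast
      then have "x \<in> hubs"
        using 2 cone_subset \<open>le a x\<close> \<open>le b x\<close> \<open>a \<noteq> b\<close> \<open>a \<in> mins\<close> \<open>b \<in> mins\<close>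
        unfolding hubs_def by blast
      then show ?thesis using hubs_in_cone_eq l 2 by blast
    qed (use q in simp)
  qed
qed

lemma old_in_calH_Lset_copy:
  assumes l: "l \<in> Lam"
  shows "(l, 0) \<in> calH (Lset U leU (l, 1)) leU - {(l, 1)}"
proof (cases "l \<in> hubs")
  case True
  then obtain a b where "a \<in> mins" "b \<in> mins" "a \<noteq> b" "le a l" "le b l"
    unfolding hubs_def by blast
  then show ?thesis
    using hubs_in_Hset_1_Lset_copy[OF l True] unfolding calH_def minset_Lset_copy[OF l] by force
next
  case False
  then have "l \<in> mins" using l unfolding Lam_def by blast
  then show ?thesis using V_refl mins_subset unfolding calH_def minset_Lset_copy[OF l] by auto
qed

lemma LambdaW_Lset_copy:
  assumes l: "l \<in> Lam"
  shows "LambdaW (Lset U leU (l, 1)) leU (l, 1) = {(l, 0)}"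
proof -
  let ?W = "Lset U leU (l, 1)"
  let ?CH = "calH ?W leU - {(l, 1)}"
  have l0: "(l, 0) \<in> ?CH" by (rule old_in_calH_Lset_copy[OF l])
  have CH: "?CH \<subseteq> insert (l, 0) ((\<lambda>a. (a, 0)) ` {a\<in>mins. le a l})"
    by (rule calH_Lset_copy_subset[OF l])
  have H1_CH: "Hset ?W leU 1 \<inter> ?CH \<subseteq> {(l, 0)}"
  proof
    fix q assume q: "q \<in> Hset ?W leU 1 \<inter> ?CH"
    then have "q \<in> insert (l, 0) ((\<lambda>a. (a, 0)) ` {a\<in>mins. le a l})" using CH by blast
    then show "q \<in> {(l, 0)}" using q mins_not_in_Hset_1_Lset_copy[of _ l] by auto
  qed
  show ?thesis
  proof (cases "l \<in> hubs")
    case True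
    have l1: "(l, 0) \<in> Hset ?W leU 1" using hubs_in_Hset_1_Lset_copy[OF l True] .
    have lW: "(l, 0) \<in> ?W" using old_in_Lset_copy_iff self_in_cone l by blast
    have "Gset ?W leU q \<inter> Hset ?W leU 1 \<inter> ?CH \<noteq> {}" if "q \<in> ?CH" for q
    proof -
      from that CH consider "q = (l, 0)" | a where "q = (a, 0)" "a \<in> mins" "le a l" by blast
      then have "leU q (l, 0)"
      proof cases
        case 1
        then show ?thesis using l Lam_subset V_refl by auto
      qed simp
      then have "(l, 0) \<in> Gset ?W leU q" using lW unfolding Gset_def by blast
      then show ?thesis using l0 l1 by blast
    qed
    then have B: "{v\<in>?CH. Gset ?W leU v \<inter> Hset ?W leU 1 \<inter> ?CH = {}} = {}" by blast
    have A: "Hset ?W leU 1 \<inter> ?CH = {(l, 0)}"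
      using H1_CH l0 l1 by (intro subset_antisym) auto
    show ?thesis unfolding LambdaW_def A B by simp
  next
    case False
    then have "l \<in> mins" using l unfolding Lam_def by blast
    then have "?CH \<subseteq> {(l, 0)}" using CH mins_eqD mins_subset by auto
    moreover have H1: "Hset ?W leU 1 \<inter> ?CH = {}"
      using H1_CH mins_not_in_Hset_1_Lset_copy[OF \<open>l \<in> mins\<close>] by blast
    ultimately have B: "{v\<in>?CH. Gset ?W leU v \<inter> Hset ?W leU 1 \<inter> ?CH = {}} = {(l, 0)}"
      using l0 by (auto simp: Int_assoc)
    then show ?thesis unfolding LambdaW_def H1 by simp
  qed
qed

lemma dval_Lset_copy: "p \<in> M \<Longrightarrow> dval (Lset U leU p) leU p = 1"
  using LambdaW_Lset_copy unfolding M_def dval_def by (auto simp: one_enat_def)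

end

lemma exists_proper_splitting:
  fixes V :: "'a set" and leV :: "'a \<Rightarrow> 'a \<Rightarrow> bool" and m :: 'a
  assumes "K_poset V leV" "proper V leV" "maxset V leV = {m}" "dimP leV V \<ge> 1"
  shows "\<exists>(U :: ('a \<times> nat) set) (leU :: 'a \<times> nat \<Rightarrow> 'a \<times> nat \<Rightarrow> bool) \<phi> M.
           K_poset U leU \<and> proper U leU \<and> splitting_with U leU V leV m \<phi> M
           \<and> (\<forall>mi\<in>M. dval (Lset U leU mi) leU mi = 1)"
proof -
  interpret top_K_poset V leV m using assms by unfold_locales
  obtain tgt where "\<And>x. x \<in> singles \<Longrightarrow> tgt x \<in> Lam"
    "\<And>x w. x \<in> singles \<Longrightarrow> w \<in> mins \<Longrightarrow> leV w x \<Longrightarrow> leV w (tgt x)"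
    "\<And>w l. w \<in> mins \<Longrightarrow> l \<in> Lam \<Longrightarrow> leV w l \<Longrightarrow> fan w \<noteq> {} \<Longrightarrow>
       {x\<in>fan w. tgt x = l} \<approx> fan w"
    using exists_target by blast
  then interpret splitting_construction V leV m tgt
    by unfold_locales
  have "K_poset U leU \<and> proper U leU \<and> splitting_with U leU V leV m phi M
      \<and> (\<forall>p\<in>M. dval (Lset U leU p) leU p = 1)"
    using K_poset_U proper_U splitting_with_U dval_Lset_copy by blast
  then show ?thesis by (intro exI[of _ U] exI[of _ leU] exI[of _ phi] exI[of _ M])
qed

theorem theorem4p8:
  fixes V :: "'a set" and leV :: "'a \<Rightarrow> 'a \<Rightarrow> bool" and m :: 'a
  assumes "K_poset V leV" and "proper V leV"
    and "maxset V leV = {m}" and "dimP leV V \<ge> 1"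
    and "dval V leV m > 1"
  shows "\<exists>(U :: ('a \<times> nat) set) (leU :: 'a \<times> nat \<Rightarrow> 'a \<times> nat \<Rightarrow> bool) \<phi> M.
           K_poset U leU \<and> proper U leU \<and> splitting_with U leU V leV m \<phi> M
           \<and> (\<forall>mi\<in>M. dval (Lset U leU mi) leU mi = 1)"
  using exists_proper_splitting[OF assms(1-4)] .

end
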